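(* Let $\mu$ be a probability measure on $\mathbb{R}^d$, let $p>0$, $q>p$ with $\mu(|\cdot|^q)<\infty$, and let $\alpha\in(0,1)$. For $T\ge2$ define $$\mathcal K_\alpha(T):=\sum_{n\ge0}2^{pn}\sum_{\ell\ge0}2^{-p\ell}\sum_{F\in\mathcal P_\ell}\min\Big\{\mu(2^nF\cap B_n),\;T^{-1/2}\mu(2^nF\cap B_n)^\alpha\Big\},$$ and set $\gamma:=\max\{\alpha,1-\frac pd\}\in(0,1)$. Then there exists $C>0$ such that for all $T>2$, $$\mathcal K_\alpha(T)\le C\,T^{-\frac{1-\max\{\gamma,p/q\}}{2(1-\alpha)}}\Big(\mathbf 1_{\{\gamma q=p\}}\log T+\mathbf 1_{\{\gamma q\neq p\}}\Big)\Big(\mathbf 1_{\{p=(1-\alpha)d\}}\log T+\mathbf 1_{\{p\ne(1-\alpha)d\}}\Big).$$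
   Context: For $\ell\in\mathbb N=\{0,1,2,\dots\}$, $\mathcal P_\ell$ is the natural partition of $(-1,1]^d$ into $2^{d\ell}$ dyadic cubes of side length $2\cdot2^{-\ell}$. For $F\in\mathcal P_\ell$ and $n\in\mathbb N$, $2^nF:=\{2^nx:x\in F\}$. Set $B_0:=(-1,1]^d$ and $B_n:=(-2^n,2^n]^d\setminus(-2^{n-1},2^{n-1}]^d$ for $n\ge1$. $\mu(|\cdot|^q)=\int|x|^q\,\mu(\mathrm dx)$. $\mathbf 1_{\{\cdot\}}$ equals $1$ if the stated condition holds and $0$ otherwise. *)

theory Defs
  imports "HOL-Probability.Probability"
begin

definition half_open_cube :: "real \<Rightarrow> (real ^ 'd) set" where
  "half_open_cube r = {x. \<forall>i. - r < x $ i \<and> x $ i \<le> r}"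

definition dyadic_cube :: "nat \<Rightarrow> ('d \<Rightarrow> nat) \<Rightarrow> (real ^ 'd) set" where
  "dyadic_cube l k = {x. \<forall>i. -1 + 2 * real (k i) / 2 ^ l < x $ i
                          \<and> x $ i \<le> -1 + 2 * real (k i + 1) / 2 ^ l}"

definition dyadic_partition :: "nat \<Rightarrow> (real ^ 'd) set set" where
  "dyadic_partition l = dyadic_cube l ` {k. \<forall>i. k i < 2 ^ l}"

definition shell :: "nat \<Rightarrow> (real ^ 'd) set" where
  "shell n = (if n = 0 then half_open_cube 1
              else half_open_cube (2 ^ n) - half_open_cube (2 ^ (n - 1)))"

definition scale_set :: "nat \<Rightarrow> (real ^ 'd) set \<Rightarrow> (real ^ 'd) set" where
  "scale_set n F = (\<lambda>x. (2 ^ n) *\<^sub>R x) ` F"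

text \<open>K_alpha(T), as an extended nonnegative real (series of nonnegative terms).\<close>
definition K_alpha :: "(real ^ 'd) measure \<Rightarrow> real \<Rightarrow> real \<Rightarrow> real \<Rightarrow> ennreal" where
  "K_alpha \<mu> p \<alpha> T =
     (\<Sum>n. \<Sum>l. ennreal (2 powr (p * real n) * 2 powr (- p * real l) *
        (\<Sum>F\<in>dyadic_partition l.
           min (measure \<mu> (scale_set n F \<inter> shell n))
               (T powr (-1/2) * measure \<mu> (scale_set n F \<inter> shell n) powr \<alpha>))))"

end

theory Submission
  imports Defs
begin

text \<open>
  Write M n for the mass of the shell B_n. Since P_l has 2^(d l) cells, the power mean inequality
  bounds the sum over F in P_l by min (M n) (T^(-1/2) 2^((1 - \<alpha>) d l) (M n)^\<alpha>). Summing over the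
  levels l, and then over the scales n, each time gives a series of minima of two geometric
  sequences, min (A 2^(-a k)) (B 2^(b k)). Such a series is at most a constant times its value
  min A (A^\<theta> B^(1-\<theta>)), \<theta> = max 0 b / (a + max 0 b), at the crossing point of the two sequences,
  with an extra logarithmic factor when b = 0. Over the levels this produces the exponent
  \<gamma> = max \<alpha> (1 - p/d); over the scales, where Markov's inequality gives M n \<le> K 2^(-q n), it
  produces max \<gamma> (p/q).
\<close>

section \<open>Power means and dyadic partitions\<close>

lemma sum_powr_le_card_powr:
  fixes f :: "'a \<Rightarrow> real"
  assumes S: "finite S" and f: "\<And>i. i \<in> S \<Longrightarrow> 0 \<le> f i" and \<alpha>: "0 < \<alpha>" "\<alpha> < 1"
  shows "(\<Sum>i\<in>S. f i powr \<alpha>) \<le> real (card S) powr (1 - \<alpha>) * (\<Sum>i\<in>S. f i) powr \<alpha>"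
proof (cases "(\<Sum>i\<in>S. f i) = 0")
  case True
  then have "\<forall>i\<in>S. f i = 0" using sum_nonneg_eq_0_iff[OF S] f by blast
  then show ?thesis by simp
next
  case False
  define s N where "s = (\<Sum>i\<in>S. f i)" and "N = real (card S)"
  have s: "0 < s" using False f unfolding s_def by (metis sum_nonneg order_le_less)
  have N: "0 < N" using S False by (auto simp: N_def card_gt_0_iff)
  define u where "u = s / N"
  have u: "0 < u" using s N by (simp add: u_def)
  have Young: "f i powr \<alpha> \<le> (\<alpha> * f i + (1 - \<alpha>) * u) * u powr (\<alpha> - 1)" if "i \<in> S" for i
  proof -
    have "f i powr \<alpha> * u powr (1 - \<alpha>) \<le> \<alpha> * f i + (1 - \<alpha>) * u"
      using f[OF that] \<alpha> u by (cases "f i = 0") (auto intro: Youngs_inequality_0)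
    then have "f i powr \<alpha> * u powr (1 - \<alpha>) * u powr (\<alpha> - 1) \<le> (\<alpha> * f i + (1 - \<alpha>) * u) * u powr (\<alpha> - 1)"
      by (rule mult_right_mono) simp
    then show ?thesis using u by (simp add: mult.assoc flip: powr_add)
  qed
  have "(\<Sum>i\<in>S. f i powr \<alpha>) \<le> (\<Sum>i\<in>S. (\<alpha> * f i + (1 - \<alpha>) * u) * u powr (\<alpha> - 1))"
    by (rule sum_mono) (rule Young)
  also have "\<dots> = (\<alpha> * s + (1 - \<alpha>) * N * u) * u powr (\<alpha> - 1)"
    unfolding s_def N_def by (simp add: sum_distrib_right sum.distrib sum_distrib_left[symmetric] mult_ac)
  also have "\<dots> = s * u powr (\<alpha> - 1)"
    using N by (simp add: u_def algebra_simps)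
  also have "\<dots> = N powr (1 - \<alpha>) * s powr \<alpha>"
    using s N by (simp add: u_def powr_divide powr_diff powr_minus_divide divide_simps)
  finally show ?thesis by (simp add: s_def N_def)
qed

lemma sum_min_powr_le:
  fixes f :: "'a \<Rightarrow> real"
  assumes S: "finite S" and f: "\<And>i. i \<in> S \<Longrightarrow> 0 \<le> f i" and \<alpha>: "0 < \<alpha>" "\<alpha> < 1"
    and sum: "(\<Sum>i\<in>S. f i) \<le> s" and card: "real (card S) \<le> N" and \<epsilon>: "0 \<le> \<epsilon>"
  shows "(\<Sum>i\<in>S. min (f i) (\<epsilon> * f i powr \<alpha>)) \<le> min s (\<epsilon> * N powr (1 - \<alpha>) * s powr \<alpha>)"
proof (rule min.boundedI)
  show "(\<Sum>i\<in>S. min (f i) (\<epsilon> * f i powr \<alpha>)) \<le> s"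
    using sum_mono[of S "\<lambda>i. min (f i) (\<epsilon> * f i powr \<alpha>)" f] sum by simp
  have "(\<Sum>i\<in>S. min (f i) (\<epsilon> * f i powr \<alpha>)) \<le> \<epsilon> * (\<Sum>i\<in>S. f i powr \<alpha>)"
    by (simp add: sum_mono sum_distrib_left)
  also have "\<dots> \<le> \<epsilon> * (N powr (1 - \<alpha>) * s powr \<alpha>)"
  proof (intro mult_left_mono \<epsilon> order.trans[OF sum_powr_le_card_powr[OF S f \<alpha>]] mult_mono)
    show "real (card S) powr (1 - \<alpha>) \<le> N powr (1 - \<alpha>)"
      using card \<alpha> by (intro powr_mono2) auto
    show "(\<Sum>i\<in>S. f i) powr \<alpha> \<le> s powr \<alpha>"
      using sum \<alpha> f by (intro powr_mono2) (auto intro: sum_nonneg)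
  qed auto
  finally show "(\<Sum>i\<in>S. min (f i) (\<epsilon> * f i powr \<alpha>)) \<le> \<epsilon> * N powr (1 - \<alpha>) * s powr \<alpha>"
    by (simp add: mult.assoc)
qed

lemma half_open_cube_borel: "half_open_cube r \<in> sets borel"
  unfolding half_open_cube_def by measurable

lemma shell_borel: "shell n \<in> sets borel"
  unfolding shell_def using half_open_cube_borel by auto

lemma dyadic_cube_borel: "dyadic_cube l k \<in> sets borel"
  unfolding dyadic_cube_def by measurable

lemma scale_set_eq_vimage: "scale_set n F = (\<lambda>x. (1 / 2 ^ n) *\<^sub>R x) -` F"
proof (intro set_eqI iffI)
  fix y assume "y \<in> (\<lambda>x. (1 / 2 ^ n) *\<^sub>R x) -` F"
  moreover have "y = (2 ^ n) *\<^sub>R ((1 / 2 ^ n) *\<^sub>R y)" by simp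
  ultimately show "y \<in> scale_set n F" unfolding scale_set_def by blast
qed (auto simp: scale_set_def)

lemma scale_set_borel:
  fixes F :: "(real ^ 'd) set"
  assumes "F \<in> sets borel"
  shows "scale_set n F \<in> sets borel"
  using measurable_sets_borel[of "\<lambda>x :: real ^ 'd. (1 / 2 ^ n) *\<^sub>R x" borel F] assms
  by (simp add: scale_set_eq_vimage)

lemma dyadic_cube_disjoint:
  assumes "k i \<noteq> k' i"
  shows "dyadic_cube l k \<inter> dyadic_cube l k' = {}"
proof -
  have interval: "-1 + 2 * real (a i) / 2 ^ l < x $ i \<and> x $ i \<le> -1 + 2 * real (a i + 1) / 2 ^ l"
    if "x \<in> dyadic_cube l a" for x a using that unfolding dyadic_cube_def by blast
  have ordered: "2 * real (a + 1) / 2 ^ l \<le> 2 * real b / 2 ^ l" if "a < b" for a b :: nat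
    using that by (intro divide_right_mono) auto
  show ?thesis
  proof (intro equals0I)
    fix x assume "x \<in> dyadic_cube l k \<inter> dyadic_cube l k'"
    then show False
      using interval[of x k] interval[of x k'] ordered[of "k i" "k' i"] ordered[of "k' i" "k i"] assms
      by (cases "k i < k' i") auto
  qed
qed

lemma dyadic_partition_disjoint:
  assumes "F \<in> dyadic_partition l" "G \<in> dyadic_partition l" "F \<noteq> G"
  shows "F \<inter> G = {}"
proof -
  obtain k k' where "F = dyadic_cube l k" "G = dyadic_cube l k'"
    using assms unfolding dyadic_partition_def by auto
  moreover from this assms(3) obtain i where "k i \<noteq> k' i" by (metis ext)
  ultimately show ?thesis using dyadic_cube_disjoint by blast
qed

lemma dyadic_index_set_eq_PiE: "{k :: 'd \<Rightarrow> nat. \<forall>i. k i < 2 ^ l} = Pi\<^sub>E UNIV (\<lambda>_. {..<2 ^ l})"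
  by (auto simp: PiE_UNIV_domain Pi_def)

lemma finite_dyadic_partition: "finite (dyadic_partition l :: (real ^ 'd) set set)"
  unfolding dyadic_partition_def dyadic_index_set_eq_PiE by (intro finite_imageI finite_PiE) auto

lemma card_dyadic_partition_le: "card (dyadic_partition l :: (real ^ 'd) set set) \<le> 2 ^ (CARD('d) * l)"
proof -
  have "card (dyadic_partition l :: (real ^ 'd) set set) \<le> card (Pi\<^sub>E (UNIV :: 'd set) (\<lambda>_. {..<(2::nat) ^ l}))"
    unfolding dyadic_partition_def dyadic_index_set_eq_PiE by (intro card_image_le finite_PiE) auto
  also have "\<dots> = 2 ^ (CARD('d) * l)"
    by (simp add: card_PiE power_mult[symmetric] mult.commute)
  finally show ?thesis .
qed

lemma sum_measure_scaled_dyadic_le: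
  fixes M :: "(real ^ 'd) measure"
  assumes "finite_measure M" and sets: "sets M = sets borel" and B: "B \<in> sets borel"
  shows "(\<Sum>F\<in>dyadic_partition l. measure M (scale_set n F \<inter> B)) \<le> measure M B"
proof -
  interpret finite_measure M by fact
  let ?A = "\<lambda>F. scale_set n F \<inter> B"
  have "?A ` dyadic_partition l \<subseteq> sets M"
    using B by (auto simp: sets dyadic_partition_def intro!: sets.Int scale_set_borel dyadic_cube_borel)
  moreover have "disjoint_family_on ?A (dyadic_partition l)"
    using dyadic_partition_disjoint
    by (fastforce simp: disjoint_family_on_def scale_set_eq_vimage)
  ultimately have "(\<Sum>F\<in>dyadic_partition l. measure M (?A F)) = measure M (\<Union>F\<in>dyadic_partition l. ?A F)"
    by (intro measure_finite_Union[symmetric] finite_dyadic_partition) auto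
  also have "\<dots> \<le> measure M B"
    using B sets by (intro finite_measure_mono) auto
  finally show ?thesis .
qed

section \<open>Reduction to the masses of the shells\<close>

lemma K_alpha_le_shell_series:
  fixes \<mu> :: "(real ^ 'd) measure" and p \<alpha> T :: real
  assumes \<mu>: "finite_measure \<mu>" "sets \<mu> = sets borel" and \<alpha>: "0 < \<alpha>" "\<alpha> < 1"
  shows "K_alpha \<mu> p \<alpha> T \<le> (\<Sum>n. \<Sum>l. ennreal (2 powr (p * n) * 2 powr (- p * l) *
    min (measure \<mu> (shell n)) (T powr (-1/2) * 2 powr ((1 - \<alpha>) * CARD('d) * l) * measure \<mu> (shell n) powr \<alpha>)))"
  unfolding K_alpha_def
proof (intro suminf_le summableI allI ennreal_leI mult_left_mono)
  fix n l :: nat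
  let ?m = "\<lambda>F. measure \<mu> (scale_set n F \<inter> shell n)"
  have "real (card (dyadic_partition l :: (real ^ 'd) set set)) \<le> 2 ^ (CARD('d) * l)"
    using card_dyadic_partition_le[where 'd='d, of l] by (simp flip: of_nat_power)
  also have "\<dots> = 2 powr (CARD('d) * l)"
    using powr_realpow[of 2 "CARD('d) * l"] by simp
  finally have "(\<Sum>F\<in>dyadic_partition l. min (?m F) (T powr (-1/2) * ?m F powr \<alpha>))
      \<le> min (measure \<mu> (shell n)) (T powr (-1/2) * (2 powr (CARD('d) * l)) powr (1 - \<alpha>) * measure \<mu> (shell n) powr \<alpha>)"
    using \<alpha> by (intro sum_min_powr_le finite_dyadic_partition sum_measure_scaled_dyadic_le \<mu> shell_borel) auto
  then show "(\<Sum>F\<in>dyadic_partition l. min (?m F) (T powr (-1/2) * ?m F powr \<alpha>))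
      \<le> min (measure \<mu> (shell n)) (T powr (-1/2) * 2 powr ((1 - \<alpha>) * CARD('d) * l) * measure \<mu> (shell n) powr \<alpha>)"
    by (simp add: powr_powr mult_ac)
qed auto

lemma emeasure_le_moment:
  fixes \<mu> :: "'a :: real_normed_vector measure"
  assumes A: "A \<in> sets \<mu>" and r: "0 < r" and far: "\<And>x. x \<in> A \<Longrightarrow> r \<le> norm x" and q: "0 \<le> q"
  shows "ennreal (r powr q) * emeasure \<mu> A \<le> (\<integral>\<^sup>+ x. ennreal (norm x powr q) \<partial>\<mu>)"
proof -
  have "ennreal (r powr q) * emeasure \<mu> A = (\<integral>\<^sup>+ x. ennreal (r powr q) * indicator A x \<partial>\<mu>)"
    using A by (simp add: nn_integral_cmult_indicator)
  also have "\<dots> \<le> (\<integral>\<^sup>+ x. ennreal (norm x powr q) \<partial>\<mu>)"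
    using far r q by (intro nn_integral_mono) (auto simp: indicator_def intro!: ennreal_leI powr_mono2)
  finally show ?thesis .
qed

lemma norm_ge_of_mem_shell:
  fixes x :: "real ^ 'd"
  assumes "x \<in> shell n" "0 < n"
  shows "2 ^ (n - 1) \<le> norm x"
proof -
  from assms obtain i where "\<not> (- (2 ^ (n - 1)) < x $ i \<and> x $ i \<le> 2 ^ (n - 1))"
    unfolding shell_def half_open_cube_def by auto
  then have "2 ^ (n - 1) \<le> \<bar>x $ i\<bar>" by auto
  also have "\<dots> \<le> norm x" by (rule component_le_norm_cart)
  finally show ?thesis .
qed

lemma measure_shell_le:
  fixes \<mu> :: "(real ^ 'd) measure"
  assumes \<mu>: "prob_space \<mu>" "sets \<mu> = sets borel" and q: "0 < q"
    and moment: "(\<integral>\<^sup>+ x. ennreal (norm x powr q) \<partial>\<mu>) < \<infinity>"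
  obtains K where "1 \<le> K" and "\<And>n. measure \<mu> (shell n) \<le> K * 2 powr (- q * n)"
proof -
  interpret prob_space \<mu> by (rule \<mu>(1))
  define I where "I = enn2real (\<integral>\<^sup>+ x. ennreal (norm x powr q) \<partial>\<mu>)"
  have I: "(\<integral>\<^sup>+ x. ennreal (norm x powr q) \<partial>\<mu>) = ennreal I" "0 \<le> I"
    using moment by (auto simp: I_def ennreal_enn2real_if less_top)
  define K where "K = max 1 (I * 2 powr q)"
  have "measure \<mu> (shell n) \<le> K * 2 powr (- q * n)" for n
  proof (cases "n = 0")
    case True
    then show ?thesis using prob_le_1[of "shell 0"] by (simp add: K_def le_max_iff_disj)
  next
    case False
    define r :: real where "r = 2 ^ (n - 1)"
    have r: "0 < r" by (simp add: r_def)
    have "ennreal (r powr q * measure \<mu> (shell n)) = ennreal (r powr q) * emeasure \<mu> (shell n)"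
      by (simp add: emeasure_eq_measure ennreal_mult)
    also have "\<dots> \<le> ennreal I"
      unfolding I(1)[symmetric] using r q False
      by (intro emeasure_le_moment) (use norm_ge_of_mem_shell[of _ n] shell_borel in \<open>auto simp: \<mu>(2) r_def\<close>)
    finally have "measure \<mu> (shell n) \<le> I / r powr q"
      using I r by (simp add: field_simps)
    also have "I / r powr q = I * 2 powr q * 2 powr (- q * n)"
    proof -
      have "r powr q = 2 powr (q * n - q)"
        using False by (simp add: r_def powr_realpow[symmetric] powr_powr of_nat_diff algebra_simps)
      then show ?thesis
        by (simp add: powr_diff powr_minus divide_inverse powr_add[symmetric] algebra_simps)
    qed
    also have "\<dots> \<le> K * 2 powr (- q * n)"
      by (intro mult_right_mono) (auto simp: K_def)
    finally show ?thesis .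
  qed
  then show thesis by (intro that[of K]) (auto simp: K_def)
qed

section \<open>Series of minima of two geometric sequences\<close>

lemma suminf_le_split_at:
  fixes f g h :: "nat \<Rightarrow> real"
  assumes "summable h" and "\<And>k. 0 \<le> f k"
    and "\<And>k. k < L \<Longrightarrow> f k \<le> g k" and "\<And>k. L \<le> k \<Longrightarrow> f k \<le> h k"
  shows "summable f" and "suminf f \<le> (\<Sum>k<L. g k) + (\<Sum>k. h (k + L))"
proof -
  show f: "summable f"
    by (rule summable_comparison_test'[OF assms(1), of L]) (use assms in auto)
  have "suminf f = (\<Sum>k. f (k + L)) + (\<Sum>k<L. f k)"
    by (rule suminf_split_initial_segment[OF f])
  also have "(\<Sum>k. f (k + L)) \<le> (\<Sum>k. h (k + L))"
    by (rule suminf_le) (use assms f in \<open>auto simp: summable_iff_shift\<close>)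
  also have "(\<Sum>k<L. f k) \<le> (\<Sum>k<L. g k)"
    by (rule sum_mono) (use assms in auto)
  finally show "suminf f \<le> (\<Sum>k<L. g k) + (\<Sum>k. h (k + L))" by simp
qed

lemma suminf_geometric_tail:
  fixes x A :: real
  assumes "\<bar>x\<bar> < 1"
  shows "(\<Sum>k. A * x ^ (k + L)) = A * x ^ L / (1 - x)"
proof -
  have "(\<lambda>k. A * x ^ L * x ^ k) sums (A * x ^ L * (1 / (1 - x)))"
    using assms by (intro sums_mult geometric_sums) simp
  then show ?thesis by (simp add: sums_iff power_add mult_ac)
qed

lemma sum_geometric_lessThan_le:
  fixes y B :: real
  assumes "1 < y" and "0 \<le> B"
  shows "(\<Sum>k<L. B * y ^ k) \<le> B * y ^ L / (y - 1)"
proof -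
  have "(\<Sum>k<L. B * y ^ k) = B * (y ^ L - 1) / (y - 1)"
    using assms by (simp add: geometric_sum flip: sum_distrib_left)
  also have "\<dots> \<le> B * y ^ L / (y - 1)"
    using assms by (intro divide_right_mono) (auto simp: algebra_simps)
  finally show ?thesis .
qed

lemma power_le_powr_of_le:
  fixes x r :: real
  assumes "0 < x" "x \<le> 1" "r \<le> real L"
  shows "x ^ L \<le> x powr r"
  using assms by (simp add: powr_realpow[symmetric] powr_mono')

lemma two_powr_mult_of_nat: "2 powr (c * real k) = (2 powr c) ^ k"
  by (simp add: powr_power mult.commute)

lemma summable_min_geometric:
  fixes x y A B :: real
  assumes "0 \<le> x" "x < 1" "0 \<le> y" "0 \<le> A" "0 \<le> B"
  shows "summable (\<lambda>k. min (A * x ^ k) (B * y ^ k))"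
proof (rule summable_comparison_test')
  show "summable (\<lambda>k. A * x ^ k)"
    using assms by (intro summable_mult summable_geometric) simp
  show "norm (min (A * x ^ k) (B * y ^ k)) \<le> A * x ^ k" for k
    using assms by simp
qed

lemma suminf_min_geometric_le_left:
  fixes x y A B :: real
  assumes "0 \<le> x" "x < 1" "0 \<le> y" "0 \<le> A" "0 \<le> B"
  shows "(\<Sum>k. min (A * x ^ k) (B * y ^ k)) \<le> A / (1 - x)"
proof -
  have "(\<Sum>k. min (A * x ^ k) (B * y ^ k)) \<le> (\<Sum>k. A * x ^ k)"
    using assms by (intro suminf_le summable_min_geometric summable_mult summable_geometric) auto
  also have "\<dots> = A / (1 - x)"
    using suminf_geometric_tail[of x A 0] assms by simp
  finally show ?thesis .
qed

lemma le_mult_minI: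
  fixes s c u v :: real
  shows "s \<le> c * u \<Longrightarrow> s \<le> c * v \<Longrightarrow> s \<le> c * min u v"
  by (simp add: min_def)

lemma suminf_min_geometric_decreasing:
  fixes x y A B :: real
  assumes x: "0 \<le> x" "x < 1" and y: "0 \<le> y" "y < 1" and AB: "0 \<le> A" "0 \<le> B"
  shows "(\<Sum>k. min (A * x ^ k) (B * y ^ k)) \<le> max (1 / (1 - x)) (1 / (1 - y)) * min A B"
proof (rule le_mult_minI)
  have "(\<Sum>k. min (A * x ^ k) (B * y ^ k)) \<le> 1 / (1 - x) * A"
    using suminf_min_geometric_le_left[of x y A B] assms by simp
  also have "\<dots> \<le> max (1 / (1 - x)) (1 / (1 - y)) * A"
    using AB by (intro mult_right_mono) auto
  finally show "(\<Sum>k. min (A * x ^ k) (B * y ^ k)) \<le> max (1 / (1 - x)) (1 / (1 - y)) * A" .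
  have "(\<Sum>k. min (A * x ^ k) (B * y ^ k)) \<le> 1 / (1 - y) * B"
    using suminf_min_geometric_le_left[of y x B A] assms by (simp add: min.commute)
  also have "\<dots> \<le> max (1 / (1 - x)) (1 / (1 - y)) * B"
    using AB by (intro mult_right_mono) auto
  finally show "(\<Sum>k. min (A * x ^ k) (B * y ^ k)) \<le> max (1 / (1 - x)) (1 / (1 - y)) * B" .
qed

lemma geometric_crossing_point:
  fixes x y A B :: real
  assumes x: "0 < x" and y: "0 < y" and AB: "0 < A" "0 < B" and xy: "ln x \<noteq> ln y"
  defines "\<theta> \<equiv> ln y / (ln y - ln x)" and "r \<equiv> ln (A / B) / (ln y - ln x)"
  shows "A * x powr r = A powr \<theta> * B powr (1 - \<theta>)" and "B * y powr r = A powr \<theta> * B powr (1 - \<theta>)"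
proof -
  have V: "A powr \<theta> * B powr (1 - \<theta>) = exp (\<theta> * ln A + (1 - \<theta>) * ln B)"
    using AB by (simp add: powr_def exp_add)
  have "ln A + r * ln x = \<theta> * ln A + (1 - \<theta>) * ln B"
    and "ln B + r * ln y = \<theta> * ln A + (1 - \<theta>) * ln B"
    using xy AB by (simp_all add: r_def \<theta>_def ln_div divide_simps) (simp_all add: algebra_simps)
  moreover have "A * x powr r = exp (ln A + r * ln x)" "B * y powr r = exp (ln B + r * ln y)"
    using x y AB by (simp_all add: powr_def exp_add)
  ultimately show "A * x powr r = A powr \<theta> * B powr (1 - \<theta>)" and "B * y powr r = A powr \<theta> * B powr (1 - \<theta>)"
    unfolding V by simp_all
qed

lemma suminf_min_geometric_crossing:
  fixes x y A B :: real
  assumes x: "0 < x" "x < 1" and y: "1 < y" and AB: "0 < A" "0 < B"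
  defines "\<theta> \<equiv> ln y / (ln y - ln x)"
  shows "(\<Sum>k. min (A * x ^ k) (B * y ^ k)) \<le> (1 / (1 - x) + y / (y - 1)) * min A (A powr \<theta> * B powr (1 - \<theta>))"
proof (rule le_mult_minI)
  have "(\<Sum>k. min (A * x ^ k) (B * y ^ k)) \<le> 1 / (1 - x) * A"
    using suminf_min_geometric_le_left[of x y A B] x y AB by simp
  also have "\<dots> \<le> (1 / (1 - x) + y / (y - 1)) * A"
    using y AB by (intro mult_right_mono) auto
  finally show "(\<Sum>k. min (A * x ^ k) (B * y ^ k)) \<le> (1 / (1 - x) + y / (y - 1)) * A" .
next
  define V where "V = A powr \<theta> * B powr (1 - \<theta>)"
  define r where "r = ln (A / B) / (ln y - ln x)"
  define L where "L = nat \<lceil>r\<rceil>"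
  have "ln x \<noteq> ln y" using x y by simp
  then have cross: "A * x powr r = V" "B * y powr r = V"
    using geometric_crossing_point[of x y A B] x y AB by (simp_all add: V_def r_def \<theta>_def)
  have split: "(\<Sum>k. min (A * x ^ k) (B * y ^ k)) \<le> (\<Sum>k<L. B * y ^ k) + (\<Sum>k. A * x ^ (k + L))"
    using x y AB by (intro suminf_le_split_at(2) summable_mult summable_geometric) auto
  have "x ^ L \<le> x powr r"
    using x by (intro power_le_powr_of_le) (auto simp: L_def real_nat_ceiling_ge)
  then have "A * x ^ L \<le> V"
    using cross AB by (metis mult_left_mono less_imp_le)
  then have tail: "(\<Sum>k. A * x ^ (k + L)) \<le> V / (1 - x)"
    using x by (simp add: suminf_geometric_tail divide_right_mono)
  have head: "(\<Sum>k<L. B * y ^ k) \<le> y / (y - 1) * V"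
  proof (cases "L = 0")
    case False
    then have "real L \<le> r + 1" by (simp add: L_def)
    then have "y ^ L \<le> y powr (r + 1)"
      using y by (simp add: powr_realpow[symmetric] powr_mono)
    then have "B * y ^ L \<le> y * (B * y powr r)"
      using AB y by (simp add: powr_add mult_left_mono mult.commute)
    then have "B * y ^ L / (y - 1) \<le> y / (y - 1) * V"
      using y cross by (simp add: divide_right_mono)
    then show ?thesis using sum_geometric_lessThan_le[of y B L] y AB by linarith
  qed (use y in \<open>simp add: V_def\<close>)
  have "(\<Sum>k. min (A * x ^ k) (B * y ^ k)) \<le> V / (1 - x) + y / (y - 1) * V"
    using split tail head by linarith
  then show "(\<Sum>k. min (A * x ^ k) (B * y ^ k)) \<le> (1 / (1 - x) + y / (y - 1)) * (A powr \<theta> * B powr (1 - \<theta>))"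
    by (simp add: V_def distrib_right)
qed

lemma suminf_min_geometric_flat:
  fixes x A B :: real
  assumes x: "0 < x" "x < 1" and AB: "0 < A" "0 < B"
  shows "(\<Sum>k. min (A * x ^ k) B) \<le> B * (max 0 (ln (A / B)) / ln (1 / x) + 1 + 1 / (1 - x))"
proof -
  define r where "r = max 0 (ln (A / B)) / ln (1 / x)"
  define L where "L = nat \<lceil>r\<rceil>"
  have lx: "0 < ln (1 / x)" using x by simp
  then have r: "0 \<le> r" "r \<le> real L" "real L \<le> r + 1"
    by (auto simp: r_def L_def real_nat_ceiling_ge)
  have split: "(\<Sum>k. min (A * x ^ k) B) \<le> (\<Sum>k<L. B) + (\<Sum>k. A * x ^ (k + L))"
    using x AB by (intro suminf_le_split_at(2) summable_mult summable_geometric) auto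
  have "A * x powr r = exp (ln A - max 0 (ln (A / B)))"
    using x AB lx by (simp add: r_def powr_def exp_diff exp_minus ln_div field_simps)
  also have "\<dots> \<le> exp (ln B)"
    by (intro exp_mono) (use AB in \<open>simp add: ln_div\<close>)
  also have "\<dots> = B"
    using AB by simp
  finally have "A * x powr r \<le> B" .
  moreover have "A * x ^ L \<le> A * x powr r"
    using power_le_powr_of_le[OF x(1) _ r(2)] x AB by (simp add: mult_left_mono)
  ultimately have "A * x ^ L \<le> B" by linarith
  then have tail: "(\<Sum>k. A * x ^ (k + L)) \<le> B / (1 - x)"
    using x by (simp add: suminf_geometric_tail divide_right_mono)
  have head: "(\<Sum>k<L. B) \<le> (r + 1) * B"
    using r AB by (simp add: mult_right_mono)
  show ?thesis
    using split tail head by (simp add: r_def algebra_simps)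
qed

lemma suminf_min_geometric_flat_le_min:
  fixes x A B :: real
  assumes x: "0 < x" "x < 1" and AB: "0 < A" "0 < B"
  defines "C \<equiv> 1 / ln (1 / x) + 1 + 1 / (1 - x)"
  shows "(\<Sum>k. min (A * x ^ k) B) \<le> C * (1 + max 0 (ln (A / B))) * min A B"
proof (rule le_mult_minI)
  define m where "m = max 0 (ln (A / B))"
  have m: "0 \<le> m" and l: "0 < ln (1 / x)" and C: "1 / (1 - x) \<le> C" "0 \<le> C"
    using x by (auto simp: m_def C_def)
  have "(\<Sum>k. min (A * x ^ k) B) \<le> 1 / (1 - x) * A"
    using suminf_min_geometric_le_left[of x 1 A B] x AB by simp
  also have "\<dots> \<le> C * (1 + m) * A"
  proof (intro mult_right_mono)
    have "C * 1 \<le> C * (1 + m)"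
      using C m by (intro mult_left_mono) auto
    then show "1 / (1 - x) \<le> C * (1 + m)"
      using C by simp
  qed (use AB in simp)
  finally show "(\<Sum>k. min (A * x ^ k) B) \<le> C * (1 + m) * A" .
  have "m / ln (1 / x) \<le> (1 + m) / ln (1 / x)" "1 / (1 - x) \<le> (1 + m) / (1 - x)"
    using m l x by (auto intro: divide_right_mono)
  then have "m / ln (1 / x) + 1 + 1 / (1 - x) \<le> C * (1 + m)"
    unfolding C_def by (simp add: algebra_simps add_divide_distrib[symmetric]) (use m in linarith)
  then have "B * (m / ln (1 / x) + 1 + 1 / (1 - x)) \<le> C * (1 + m) * B"
    using AB by (simp add: mult_left_mono mult.commute)
  then show "(\<Sum>k. min (A * x ^ k) B) \<le> C * (1 + m) * B"
    using suminf_min_geometric_flat[OF x AB] by (simp add: m_def)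
qed

lemma suminf_min_two_powr_le:
  fixes a b :: real
  assumes a: "0 < a"
  defines "\<theta> \<equiv> max 0 b / (a + max 0 b)"
  obtains C where "0 < C"
    and "\<And>A B. 0 < A \<Longrightarrow> 0 < B \<Longrightarrow>
      (\<Sum>k. min (A * 2 powr (- a * k)) (B * 2 powr (b * k)))
        \<le> C * (if b = 0 then 1 + max 0 (ln (A / B)) else 1) * min A (A powr \<theta> * B powr (1 - \<theta>))"
proof -
  define x y :: real where "x = 2 powr - a" and "y = 2 powr b"
  have x: "0 < x" "x < 1" using a by (auto simp: x_def intro: powr_less_one)
  have y: "0 < y" by (simp add: y_def)
  have terms: "(\<lambda>k. min (A * 2 powr (- a * k)) (B * 2 powr (b * k))) = (\<lambda>k. min (A * x ^ k) (B * y ^ k))"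
    for A B by (simp only: x_def y_def two_powr_mult_of_nat)
  consider "b < 0" | "b = 0" | "0 < b" by linarith
  then show thesis
  proof cases
    case 1
    then have "y < 1" by (simp add: y_def powr_less_one)
    then show thesis
      using x y 1 suminf_min_geometric_decreasing[of x y]
      by (intro that[unfolded terms, of "max (1 / (1 - x)) (1 / (1 - y))"]) (auto simp: \<theta>_def less_max_iff_disj)
  next
    case 2
    moreover have "ln (1 / x) = a * ln 2" by (simp add: x_def ln_div)
    ultimately show thesis
      using a x suminf_min_geometric_flat_le_min[of x]
      by (intro that[unfolded terms, of "1 / (a * ln 2) + 1 + 1 / (1 - x)"]) (auto simp: \<theta>_def y_def intro!: add_pos_pos)
  next
    case 3
    then have "1 < y" by (simp add: y_def)
    have "ln y / (ln y - ln x) = (b * ln 2) / ((a + b) * ln 2)"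
      by (simp add: x_def y_def algebra_simps)
    also have "\<dots> = \<theta>"
      using 3 by (simp add: \<theta>_def)
    finally show thesis
      using x \<open>1 < y\<close> 3 suminf_min_geometric_crossing[of x y]
      by (intro that[unfolded terms, of "1 / (1 - x) + y / (y - 1)"]) (auto simp: add_pos_pos)
  qed
qed

section \<open>Summation over levels and scales\<close>

lemma summable_min_two_powr:
  fixes a b A B :: real
  assumes "0 < a" "0 \<le> A" "0 \<le> B"
  shows "summable (\<lambda>k. min (A * 2 powr (- a * k)) (B * 2 powr (b * k)))"
  using summable_min_geometric[of "2 powr - a" "2 powr b" A B] assms
  by (simp only: two_powr_mult_of_nat) (simp add: powr_less_one)

lemma powr_interpolate:
  fixes M \<epsilon> \<alpha> \<theta> :: real
  assumes "0 < M" "0 < \<epsilon>"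
  shows "M powr \<theta> * (\<epsilon> * M powr \<alpha>) powr (1 - \<theta>) = \<epsilon> powr (1 - \<theta>) * M powr (\<theta> + \<alpha> * (1 - \<theta>))"
  using assms by (simp add: powr_mult powr_powr powr_add mult_ac)

lemma ln_level_ratio_le:
  fixes M \<epsilon> \<alpha> :: real
  assumes M: "0 < M" "M \<le> 1" and \<epsilon>: "0 < \<epsilon>" "\<epsilon> \<le> 1" and \<alpha>: "\<alpha> \<le> 1"
  shows "max 0 (ln (M / (\<epsilon> * M powr \<alpha>))) \<le> ln (1 / \<epsilon>)"
proof -
  have "M / (\<epsilon> * M powr \<alpha>) = M powr (1 - \<alpha>) / \<epsilon>"
    using M by (simp add: powr_diff)
  also have "\<dots> \<le> 1 / \<epsilon>"
    using M \<epsilon> \<alpha> by (intro divide_right_mono powr_le1) auto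
  finally show ?thesis
    using M \<epsilon> by (auto intro!: ln_mono)
qed

lemma suminf_over_levels_le:
  fixes p d \<alpha> :: real
  assumes p: "0 < p" and d: "0 < d" and \<alpha>: "0 < \<alpha>" "\<alpha> < 1"
  defines "\<gamma> \<equiv> max \<alpha> (1 - p / d)"
  obtains C where "0 < C"
    and "\<And>\<epsilon> M. 0 < \<epsilon> \<Longrightarrow> \<epsilon> \<le> 1 \<Longrightarrow> 0 \<le> M \<Longrightarrow> M \<le> 1 \<Longrightarrow>
      summable (\<lambda>l. 2 powr (- p * l) * min M (\<epsilon> * 2 powr ((1 - \<alpha>) * d * l) * M powr \<alpha>)) \<and>
      (\<Sum>l. 2 powr (- p * l) * min M (\<epsilon> * 2 powr ((1 - \<alpha>) * d * l) * M powr \<alpha>))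
        \<le> C * (if p = (1 - \<alpha>) * d then 1 + ln (1 / \<epsilon>) else 1) * min M (\<epsilon> powr ((1 - \<gamma>) / (1 - \<alpha>)) * M powr \<gamma>)"
proof -
  define b where "b = (1 - \<alpha>) * d - p"
  define \<theta> where "\<theta> = max 0 b / (p + max 0 b)"
  obtain C where C: "0 < C"
    and bound: "\<And>A B. 0 < A \<Longrightarrow> 0 < B \<Longrightarrow>
      (\<Sum>k. min (A * 2 powr (- p * k)) (B * 2 powr (b * k)))
        \<le> C * (if b = 0 then 1 + max 0 (ln (A / B)) else 1) * min A (A powr \<theta> * B powr (1 - \<theta>))"
    by (rule suminf_min_two_powr_le[OF p, of b, folded \<theta>_def]) (rule that)
  have exponent: "1 - \<theta> = (1 - \<gamma>) / (1 - \<alpha>)"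
    using p d \<alpha> by (cases "0 \<le> b") (auto simp: \<theta>_def \<gamma>_def b_def field_simps max_def)
  have "\<theta> + \<alpha> * (1 - \<theta>) = 1 - (1 - \<alpha>) * (1 - \<theta>)"
    by (simp add: algebra_simps)
  also have "\<dots> = \<gamma>"
    using \<alpha> by (simp add: exponent)
  finally have interpolation: "\<theta> + \<alpha> * (1 - \<theta>) = \<gamma>" .
  have terms: "2 powr (- p * l) * min M (\<epsilon> * 2 powr ((1 - \<alpha>) * d * l) * M powr \<alpha>)
      = min (M * 2 powr (- p * l)) (\<epsilon> * M powr \<alpha> * 2 powr (b * l))" for \<epsilon> M and l :: nat
    by (simp add: b_def min_mult_distrib_left mult_ac flip: powr_add) (simp add: algebra_simps)
  show thesis
  proof (rule that[OF C], intro conjI)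
    fix \<epsilon> M :: real assume \<epsilon>: "0 < \<epsilon>" "\<epsilon> \<le> 1" and M: "0 \<le> M" "M \<le> 1"
    show "summable (\<lambda>l. 2 powr (- p * l) * min M (\<epsilon> * 2 powr ((1 - \<alpha>) * d * l) * M powr \<alpha>))"
      unfolding terms using p \<epsilon> M by (intro summable_min_two_powr) auto
    show "(\<Sum>l. 2 powr (- p * l) * min M (\<epsilon> * 2 powr ((1 - \<alpha>) * d * l) * M powr \<alpha>))
        \<le> C * (if p = (1 - \<alpha>) * d then 1 + ln (1 / \<epsilon>) else 1) * min M (\<epsilon> powr ((1 - \<gamma>) / (1 - \<alpha>)) * M powr \<gamma>)"
    proof (cases "M = 0")
      case False
      then have "0 < M" using M by simp
      have "max 0 (ln (M / (\<epsilon> * M powr \<alpha>))) \<le> ln (1 / \<epsilon>)"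
        using \<open>0 < M\<close> M \<epsilon> \<alpha> by (intro ln_level_ratio_le) auto
      then have log_factor: "(if b = 0 then 1 + max 0 (ln (M / (\<epsilon> * M powr \<alpha>))) else 1)
          \<le> (if p = (1 - \<alpha>) * d then 1 + ln (1 / \<epsilon>) else 1)"
        by (simp add: b_def)
      have "M powr \<theta> * (\<epsilon> * M powr \<alpha>) powr (1 - \<theta>) = \<epsilon> powr ((1 - \<gamma>) / (1 - \<alpha>)) * M powr \<gamma>"
        using powr_interpolate[OF \<open>0 < M\<close> \<open>0 < \<epsilon>\<close>, of \<theta> \<alpha>] unfolding exponent interpolation[unfolded exponent] .
      then show ?thesis
        unfolding terms using bound[of M "\<epsilon> * M powr \<alpha>"] \<open>0 < M\<close> \<epsilon> C log_factor
        by (auto elim!: order_trans intro!: mult_right_mono mult_left_mono)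
    qed (use \<alpha> in simp)
  qed
qed

lemma scale_term_le_min_two_powr:
  fixes M K E \<gamma> p q :: real
  assumes M: "0 \<le> M" "M \<le> K * 2 powr (- q * n)" and "0 < K" "0 \<le> E" "0 \<le> \<gamma>"
  shows "2 powr (p * n) * min M (E * M powr \<gamma>)
    \<le> min (K * 2 powr (- (q - p) * n)) (E * K powr \<gamma> * 2 powr ((p - q * \<gamma>) * n))"
proof -
  have "min M (E * M powr \<gamma>) \<le> min (K * 2 powr (- q * n)) (E * (K * 2 powr (- q * n)) powr \<gamma>)"
    using assms by (intro min.mono mult_left_mono powr_mono2) auto
  then have "2 powr (p * n) * min M (E * M powr \<gamma>)
      \<le> 2 powr (p * n) * min (K * 2 powr (- q * n)) (E * (K * 2 powr (- q * n)) powr \<gamma>)"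
    by (intro mult_left_mono) auto
  also have "\<dots> = min (K * 2 powr (- (q - p) * n)) (E * K powr \<gamma> * 2 powr ((p - q * \<gamma>) * n))"
    using assms by (simp add: min_mult_distrib_left powr_mult powr_powr mult_ac flip: powr_add)
      (simp add: algebra_simps)
  finally show ?thesis .
qed

lemma ln_scale_ratio_le:
  fixes K E \<gamma> :: real
  assumes K: "1 \<le> K" and E: "0 < E" "E \<le> 1" and \<gamma>: "0 \<le> \<gamma>"
  shows "1 + max 0 (ln (K / (E * K powr \<gamma>))) \<le> (1 + ln K) * (1 + ln (1 / E))"
proof -
  have logs: "0 \<le> ln K" "0 \<le> ln (1 / E)"
    using K E by auto
  have "ln (K / (E * K powr \<gamma>)) = (1 - \<gamma>) * ln K + ln (1 / E)"
    using E K by (simp add: ln_div ln_mult ln_powr algebra_simps)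
  also have "\<dots> \<le> ln K + ln (1 / E)"
    using mult_nonneg_nonneg[OF \<gamma> logs(1)] by (simp add: algebra_simps)
  finally show ?thesis
    using logs by (simp add: algebra_simps) (use mult_nonneg_nonneg[OF logs] in linarith)
qed

lemma powr_interpolate_le:
  fixes K E \<gamma> \<theta> :: real
  assumes K: "1 \<le> K" and E: "0 < E" and \<theta>: "0 \<le> \<theta>" "\<theta> \<le> 1" and \<gamma>: "\<gamma> \<le> 1"
  shows "K powr \<theta> * (E * K powr \<gamma>) powr (1 - \<theta>) \<le> K * E powr (1 - \<theta>)"
proof -
  have "K powr \<theta> * (E * K powr \<gamma>) powr (1 - \<theta>) = E powr (1 - \<theta>) * K powr (\<theta> + \<gamma> * (1 - \<theta>))"
    using K E by (intro powr_interpolate) auto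
  also have "\<dots> \<le> E powr (1 - \<theta>) * K powr 1"
    using K \<theta> mult_right_mono[OF \<gamma>, of "1 - \<theta>"] by (intro mult_left_mono powr_mono) auto
  finally show ?thesis
    using K by (simp add: mult.commute)
qed

lemma suminf_over_scales_le:
  fixes p q \<gamma> K :: real
  assumes p: "0 < p" "p < q" and \<gamma>: "0 \<le> \<gamma>" "\<gamma> < 1" and K: "1 \<le> K"
  obtains C where "0 < C"
    and "\<And>E (M :: nat \<Rightarrow> real). 0 < E \<Longrightarrow> E \<le> 1 \<Longrightarrow> (\<forall>n. 0 \<le> M n \<and> M n \<le> K * 2 powr (- q * n)) \<Longrightarrow>
      summable (\<lambda>n. 2 powr (p * n) * min (M n) (E * M n powr \<gamma>)) \<and>
      (\<Sum>n. 2 powr (p * n) * min (M n) (E * M n powr \<gamma>))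
        \<le> C * (if \<gamma> * q = p then 1 + ln (1 / E) else 1) * E powr ((1 - max \<gamma> (p / q)) / (1 - \<gamma>))"
proof -
  define a b where "a = q - p" and "b = p - q * \<gamma>"
  define \<theta> where "\<theta> = max 0 b / (a + max 0 b)"
  have a: "0 < a" using p by (simp add: a_def)
  obtain C where C: "0 < C"
    and bound: "\<And>A B. 0 < A \<Longrightarrow> 0 < B \<Longrightarrow>
      (\<Sum>k. min (A * 2 powr (- a * k)) (B * 2 powr (b * k)))
        \<le> C * (if b = 0 then 1 + max 0 (ln (A / B)) else 1) * min A (A powr \<theta> * B powr (1 - \<theta>))"
    by (rule suminf_min_two_powr_le[OF a, of b, folded \<theta>_def]) (rule that)
  have exponent: "1 - \<theta> = (1 - max \<gamma> (p / q)) / (1 - \<gamma>)"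
    using p \<gamma> by (cases "0 \<le> b") (auto simp: \<theta>_def a_def b_def field_simps max_def)
  have \<theta>: "0 \<le> \<theta>" "\<theta> \<le> 1"
    using a by (auto simp: \<theta>_def)
  show thesis
  proof (rule that[of "C * K * (1 + ln K)"])
    show "0 < C * K * (1 + ln K)"
      using C K by (simp add: add_pos_nonneg)
    fix E :: real and M :: "nat \<Rightarrow> real"
    assume E: "0 < E" "E \<le> 1" and "\<forall>n. 0 \<le> M n \<and> M n \<le> K * 2 powr (- q * n)"
    then have dominated: "2 powr (p * n) * min (M n) (E * M n powr \<gamma>)
        \<le> min (K * 2 powr (- a * n)) (E * K powr \<gamma> * 2 powr (b * n))" for n
      using K \<gamma> unfolding a_def b_def by (intro scale_term_le_min_two_powr) auto
    have summable_dominant: "summable (\<lambda>n. min (K * 2 powr (- a * n)) (E * K powr \<gamma> * 2 powr (b * n)))"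
      using a K E by (intro summable_min_two_powr) auto
    have "0 \<le> 2 powr (p * n) * min (M n) (E * M n powr \<gamma>)" for n
      using \<open>\<forall>n. 0 \<le> M n \<and> M n \<le> _\<close> E by simp
    then have summable: "summable (\<lambda>n. 2 powr (p * n) * min (M n) (E * M n powr \<gamma>))"
      using dominated by (intro summable_comparison_test'[OF summable_dominant, of 0]) auto
    have "(\<Sum>n. 2 powr (p * n) * min (M n) (E * M n powr \<gamma>))
        \<le> (\<Sum>n. min (K * 2 powr (- a * n)) (E * K powr \<gamma> * 2 powr (b * n)))"
      using dominated summable summable_dominant by (rule suminf_le)
    also have "\<dots> \<le> C * (if b = 0 then 1 + max 0 (ln (K / (E * K powr \<gamma>))) else 1)
        * min K (K powr \<theta> * (E * K powr \<gamma>) powr (1 - \<theta>))"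
      using bound K E by simp
    also have "\<dots> \<le> C * ((1 + ln K) * (if \<gamma> * q = p then 1 + ln (1 / E) else 1)) * (K * E powr (1 - \<theta>))"
      using C K E \<theta> \<gamma> ln_scale_ratio_le[OF K E] powr_interpolate_le[OF K E(1) \<theta>, of \<gamma>]
      by (intro mult_left_mono mult_mono) (auto simp: b_def min.coboundedI2)
    finally show "summable (\<lambda>n. 2 powr (p * n) * min (M n) (E * M n powr \<gamma>)) \<and>
      (\<Sum>n. 2 powr (p * n) * min (M n) (E * M n powr \<gamma>))
        \<le> C * K * (1 + ln K) * (if \<gamma> * q = p then 1 + ln (1 / E) else 1) * E powr ((1 - max \<gamma> (p / q)) / (1 - \<gamma>))"
      using summable by (simp add: exponent mult_ac)
  qed
qed

lemma suminf_suminf_ennreal_le: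
  fixes f :: "nat \<Rightarrow> nat \<Rightarrow> real" and g :: "nat \<Rightarrow> real"
  assumes "\<And>n l. 0 \<le> f n l" "\<And>n. summable (f n)" "\<And>n. suminf (f n) \<le> g n" "summable g"
  shows "(\<Sum>n. \<Sum>l. ennreal (f n l)) \<le> ennreal (\<Sum>n. g n)"
proof -
  have g: "0 \<le> g n" for n
    using suminf_nonneg[OF assms(2,1)] assms(3) order_trans by blast
  have "(\<Sum>n. \<Sum>l. ennreal (f n l)) = (\<Sum>n. ennreal (suminf (f n)))"
    using assms by (simp add: suminf_ennreal2)
  also have "\<dots> \<le> (\<Sum>n. ennreal (g n))"
    using assms by (intro suminf_le ennreal_leI summableI)
  also have "\<dots> = ennreal (\<Sum>n. g n)"
    using g assms by (simp add: suminf_ennreal2)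
  finally show ?thesis .
qed

lemma double_suminf_over_levels_le:
  fixes p d \<alpha> :: real
  assumes p: "0 < p" and d: "0 < d" and \<alpha>: "0 < \<alpha>" "\<alpha> < 1"
  defines "\<gamma> \<equiv> max \<alpha> (1 - p / d)"
  obtains C where "0 < C"
    and "\<And>\<epsilon> (M :: nat \<Rightarrow> real). 0 < \<epsilon> \<Longrightarrow> \<epsilon> \<le> 1 \<Longrightarrow> (\<forall>n. 0 \<le> M n \<and> M n \<le> 1) \<Longrightarrow>
      summable (\<lambda>n. 2 powr (p * n) * min (M n) (\<epsilon> powr ((1 - \<gamma>) / (1 - \<alpha>)) * M n powr \<gamma>)) \<Longrightarrow>
      (\<Sum>n. \<Sum>l. ennreal (2 powr (p * n) * 2 powr (- p * l) *
          min (M n) (\<epsilon> * 2 powr ((1 - \<alpha>) * d * l) * M n powr \<alpha>)))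
        \<le> ennreal ((C * (if p = (1 - \<alpha>) * d then 1 + ln (1 / \<epsilon>) else 1)) *
          (\<Sum>n. 2 powr (p * n) * min (M n) (\<epsilon> powr ((1 - \<gamma>) / (1 - \<alpha>)) * M n powr \<gamma>)))"
proof -
  obtain C where C: "0 < C" and level: "\<And>\<epsilon> M. 0 < \<epsilon> \<Longrightarrow> \<epsilon> \<le> 1 \<Longrightarrow> 0 \<le> M \<Longrightarrow> M \<le> 1 \<Longrightarrow>
      summable (\<lambda>l. 2 powr (- p * l) * min M (\<epsilon> * 2 powr ((1 - \<alpha>) * d * l) * M powr \<alpha>)) \<and>
      (\<Sum>l. 2 powr (- p * l) * min M (\<epsilon> * 2 powr ((1 - \<alpha>) * d * l) * M powr \<alpha>))
        \<le> C * (if p = (1 - \<alpha>) * d then 1 + ln (1 / \<epsilon>) else 1) * min M (\<epsilon> powr ((1 - \<gamma>) / (1 - \<alpha>)) * M powr \<gamma>)"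
    by (rule suminf_over_levels_le[OF p d \<alpha>, folded \<gamma>_def]) (rule that)
  show thesis
  proof (rule that[OF C])
    fix \<epsilon> :: real and M :: "nat \<Rightarrow> real"
    assume \<epsilon>: "0 < \<epsilon>" "\<epsilon> \<le> 1" and M: "\<forall>n. 0 \<le> M n \<and> M n \<le> 1"
      and summable: "summable (\<lambda>n. 2 powr (p * n) * min (M n) (\<epsilon> powr ((1 - \<gamma>) / (1 - \<alpha>)) * M n powr \<gamma>))"
    define L where "L = C * (if p = (1 - \<alpha>) * d then 1 + ln (1 / \<epsilon>) else 1)"
    define h where "h n = (\<lambda>l::nat. 2 powr (- p * l) * min (M n) (\<epsilon> * 2 powr ((1 - \<alpha>) * d * l) * M n powr \<alpha>))"
      for n
    have h: "summable (h n)" "suminf (h n) \<le> L * min (M n) (\<epsilon> powr ((1 - \<gamma>) / (1 - \<alpha>)) * M n powr \<gamma>)" for n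
      using level[OF \<epsilon>, of "M n"] M by (simp_all add: h_def L_def)
    have "(\<Sum>n. \<Sum>l. ennreal (2 powr (p * n) * 2 powr (- p * l) *
          min (M n) (\<epsilon> * 2 powr ((1 - \<alpha>) * d * l) * M n powr \<alpha>)))
        = (\<Sum>n. \<Sum>l. ennreal (2 powr (p * n) * h n l))"
      by (simp add: h_def mult.assoc)
    also have "\<dots> \<le> ennreal (\<Sum>n. L * (2 powr (p * n) * min (M n) (\<epsilon> powr ((1 - \<gamma>) / (1 - \<alpha>)) * M n powr \<gamma>)))"
    proof (rule suminf_suminf_ennreal_le)
      show "0 \<le> 2 powr (p * n) * h n l" for n l
        using M \<epsilon> by (simp add: h_def)
      show "summable (\<lambda>l. 2 powr (p * n) * h n l)" for n
        using h(1) by (rule summable_mult)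
      show "(\<Sum>l. 2 powr (p * n) * h n l) \<le> L * (2 powr (p * n) * min (M n) (\<epsilon> powr ((1 - \<gamma>) / (1 - \<alpha>)) * M n powr \<gamma>))" for n
        using h(2)[of n] by (simp add: suminf_mult[OF h(1)] mult_left_mono mult.left_commute)
      show "summable (\<lambda>n. L * (2 powr (p * n) * min (M n) (\<epsilon> powr ((1 - \<gamma>) / (1 - \<alpha>)) * M n powr \<gamma>)))"
        using summable by (rule summable_mult)
    qed
    also have "\<dots> = ennreal (L * (\<Sum>n. 2 powr (p * n) * min (M n) (\<epsilon> powr ((1 - \<gamma>) / (1 - \<alpha>)) * M n powr \<gamma>)))"
      using summable by (simp add: suminf_mult)
    finally show "(\<Sum>n. \<Sum>l. ennreal (2 powr (p * n) * 2 powr (- p * l) *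
          min (M n) (\<epsilon> * 2 powr ((1 - \<alpha>) * d * l) * M n powr \<alpha>)))
        \<le> ennreal (L * (\<Sum>n. 2 powr (p * n) * min (M n) (\<epsilon> powr ((1 - \<gamma>) / (1 - \<alpha>)) * M n powr \<gamma>)))" .
  qed
qed

lemma double_suminf_scales_levels_le:
  fixes p q d \<alpha> K :: real
  assumes p: "0 < p" "p < q" and d: "0 < d" and \<alpha>: "0 < \<alpha>" "\<alpha> < 1" and K: "1 \<le> K"
  defines "\<gamma> \<equiv> max \<alpha> (1 - p / d)"
  obtains C where "0 < C"
    and "\<And>\<epsilon> (M :: nat \<Rightarrow> real). 0 < \<epsilon> \<Longrightarrow> \<epsilon> \<le> 1 \<Longrightarrow>
      (\<forall>n. 0 \<le> M n \<and> M n \<le> 1 \<and> M n \<le> K * 2 powr (- q * n)) \<Longrightarrow>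
      (\<Sum>n. \<Sum>l. ennreal (2 powr (p * n) * 2 powr (- p * l) *
          min (M n) (\<epsilon> * 2 powr ((1 - \<alpha>) * d * l) * M n powr \<alpha>)))
        \<le> ennreal (C * \<epsilon> powr ((1 - max \<gamma> (p / q)) / (1 - \<alpha>)) *
          (if \<gamma> * q = p then 1 + ln (1 / \<epsilon>) else 1) * (if p = (1 - \<alpha>) * d then 1 + ln (1 / \<epsilon>) else 1))"
proof -
  have \<gamma>: "\<alpha> \<le> \<gamma>" "0 \<le> \<gamma>" "\<gamma> < 1" using \<alpha> p d by (auto simp: \<gamma>_def)
  obtain C1 where C1: "0 < C1" and levels: "\<And>\<epsilon> (M :: nat \<Rightarrow> real). 0 < \<epsilon> \<Longrightarrow> \<epsilon> \<le> 1 \<Longrightarrow>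
      (\<forall>n. 0 \<le> M n \<and> M n \<le> 1) \<Longrightarrow>
      summable (\<lambda>n. 2 powr (p * n) * min (M n) (\<epsilon> powr ((1 - \<gamma>) / (1 - \<alpha>)) * M n powr \<gamma>)) \<Longrightarrow>
      (\<Sum>n. \<Sum>l. ennreal (2 powr (p * n) * 2 powr (- p * l) *
          min (M n) (\<epsilon> * 2 powr ((1 - \<alpha>) * d * l) * M n powr \<alpha>)))
        \<le> ennreal ((C1 * (if p = (1 - \<alpha>) * d then 1 + ln (1 / \<epsilon>) else 1)) *
          (\<Sum>n. 2 powr (p * n) * min (M n) (\<epsilon> powr ((1 - \<gamma>) / (1 - \<alpha>)) * M n powr \<gamma>)))"
    by (rule double_suminf_over_levels_le[OF p(1) d \<alpha>, folded \<gamma>_def]) (rule that)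
  obtain C2 where C2: "0 < C2" and scales: "\<And>E (M :: nat \<Rightarrow> real). 0 < E \<Longrightarrow> E \<le> 1 \<Longrightarrow>
      (\<forall>n. 0 \<le> M n \<and> M n \<le> K * 2 powr (- q * n)) \<Longrightarrow>
      summable (\<lambda>n. 2 powr (p * n) * min (M n) (E * M n powr \<gamma>)) \<and>
      (\<Sum>n. 2 powr (p * n) * min (M n) (E * M n powr \<gamma>))
        \<le> C2 * (if \<gamma> * q = p then 1 + ln (1 / E) else 1) * E powr ((1 - max \<gamma> (p / q)) / (1 - \<gamma>))"
    by (rule suminf_over_scales_le[OF p \<gamma>(2,3) K]) (rule that)
  show thesis
  proof (rule that[of "C1 * C2"])
    show "0 < C1 * C2" using C1 C2 by simp
    fix \<epsilon> :: real and M :: "nat \<Rightarrow> real"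
    assume \<epsilon>: "0 < \<epsilon>" "\<epsilon> \<le> 1" and M: "\<forall>n. 0 \<le> M n \<and> M n \<le> 1 \<and> M n \<le> K * 2 powr (- q * n)"
    define E where "E = \<epsilon> powr ((1 - \<gamma>) / (1 - \<alpha>))"
    define S where "S = (\<Sum>n. 2 powr (p * n) * min (M n) (E * M n powr \<gamma>))"
    define L where "L = (if p = (1 - \<alpha>) * d then 1 + ln (1 / \<epsilon>) else 1)"
    have E: "0 < E" "E \<le> 1"
      using \<epsilon> \<alpha> \<gamma> by (auto simp: E_def powr_le1)
    have "ln (1 / E) = (1 - \<gamma>) / (1 - \<alpha>) * ln (1 / \<epsilon>)"
      using \<epsilon> by (simp add: E_def ln_div ln_powr)
    also have "\<dots> \<le> ln (1 / \<epsilon>)"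
      using \<epsilon> \<alpha> \<gamma> by (intro mult_left_le_one_le) auto
    finally have "(if \<gamma> * q = p then 1 + ln (1 / E) else 1) \<le> (if \<gamma> * q = p then 1 + ln (1 / \<epsilon>) else 1)"
      by simp
    have "S \<le> C2 * (if \<gamma> * q = p then 1 + ln (1 / E) else 1) * E powr ((1 - max \<gamma> (p / q)) / (1 - \<gamma>))"
      using scales[OF E, of M] M unfolding S_def by simp
    also have "\<dots> \<le> C2 * (if \<gamma> * q = p then 1 + ln (1 / \<epsilon>) else 1) * E powr ((1 - max \<gamma> (p / q)) / (1 - \<gamma>))"
      using C2 \<open>(if \<gamma> * q = p then _ else 1) \<le> _\<close> by (intro mult_right_mono mult_left_mono) auto
    also have "E powr ((1 - max \<gamma> (p / q)) / (1 - \<gamma>)) = \<epsilon> powr ((1 - max \<gamma> (p / q)) / (1 - \<alpha>))"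
      using \<gamma> by (simp add: E_def powr_powr)
    finally have S_bound: "S \<le> C2 * (if \<gamma> * q = p then 1 + ln (1 / \<epsilon>) else 1) * \<epsilon> powr ((1 - max \<gamma> (p / q)) / (1 - \<alpha>))" .
    have "(\<Sum>n. \<Sum>l. ennreal (2 powr (p * n) * 2 powr (- p * l) *
          min (M n) (\<epsilon> * 2 powr ((1 - \<alpha>) * d * l) * M n powr \<alpha>))) \<le> ennreal (C1 * L * S)"
      using levels[OF \<epsilon>] scales[OF E, of M] M unfolding S_def L_def E_def by simp
    also have "\<dots> \<le> ennreal (C1 * L * (C2 * (if \<gamma> * q = p then 1 + ln (1 / \<epsilon>) else 1) *
        \<epsilon> powr ((1 - max \<gamma> (p / q)) / (1 - \<alpha>))))"
      using C1 \<epsilon> S_bound by (intro ennreal_leI mult_left_mono) (auto simp: L_def)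
    finally show "(\<Sum>n. \<Sum>l. ennreal (2 powr (p * n) * 2 powr (- p * l) *
          min (M n) (\<epsilon> * 2 powr ((1 - \<alpha>) * d * l) * M n powr \<alpha>)))
        \<le> ennreal (C1 * C2 * \<epsilon> powr ((1 - max \<gamma> (p / q)) / (1 - \<alpha>)) *
          (if \<gamma> * q = p then 1 + ln (1 / \<epsilon>) else 1) * L)"
      by (simp add: mult_ac)
  qed
qed

section \<open>Decay of K_alpha in T\<close>

lemma log_factor_le:
  fixes T :: real
  assumes "2 \<le> T"
  shows "(if P then 1 + ln T / 2 else 1) \<le> (1 / ln 2 + 1 / 2) * (if P then ln T else 1)"
proof (cases P)
  case True
  have "1 \<le> ln T / ln 2"
    using assms by simp
  with True show ?thesis
    by (simp add: distrib_right)
next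
  case False
  have "1 \<le> 1 / ln (2 :: real)"
    using ln_2_less_1 by simp
  then have "1 \<le> 1 / ln 2 + 1 / (2 :: real)"
    by linarith
  with False show ?thesis
    by simp
qed

lemma K_alpha_le_powr:
  fixes \<mu> :: "(real ^ 'd) measure" and p q \<alpha> :: real
  assumes \<mu>: "prob_space \<mu>" "sets \<mu> = sets borel" and p: "0 < p" "p < q"
    and moment: "(\<integral>\<^sup>+ x. ennreal (norm x powr q) \<partial>\<mu>) < \<infinity>" and \<alpha>: "0 < \<alpha>" "\<alpha> < 1"
  defines "\<gamma> \<equiv> max \<alpha> (1 - p / real CARD('d))"
  obtains C where "0 < C"
    and "\<And>T. 1 < T \<Longrightarrow> K_alpha \<mu> p \<alpha> T \<le> ennreal (C * T powr (- (1 - max \<gamma> (p / q)) / (2 * (1 - \<alpha>))) *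
      (if \<gamma> * q = p then 1 + ln T / 2 else 1) * (if p = (1 - \<alpha>) * real CARD('d) then 1 + ln T / 2 else 1))"
proof -
  interpret prob_space \<mu> by (rule \<mu>(1))
  have q: "0 < q" and d: "0 < real CARD('d)" using p by auto
  obtain K where K: "1 \<le> K" and shells: "\<And>n. measure \<mu> (shell n) \<le> K * 2 powr (- q * n)"
    by (rule measure_shell_le[OF \<mu> q moment]) (rule that)
  obtain C where C: "0 < C" and series: "\<And>\<epsilon> (M :: nat \<Rightarrow> real). 0 < \<epsilon> \<Longrightarrow> \<epsilon> \<le> 1 \<Longrightarrow>
      (\<forall>n. 0 \<le> M n \<and> M n \<le> 1 \<and> M n \<le> K * 2 powr (- q * n)) \<Longrightarrow>
      (\<Sum>n. \<Sum>l. ennreal (2 powr (p * n) * 2 powr (- p * l) *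
          min (M n) (\<epsilon> * 2 powr ((1 - \<alpha>) * real CARD('d) * l) * M n powr \<alpha>)))
        \<le> ennreal (C * \<epsilon> powr ((1 - max \<gamma> (p / q)) / (1 - \<alpha>)) *
          (if \<gamma> * q = p then 1 + ln (1 / \<epsilon>) else 1) * (if p = (1 - \<alpha>) * real CARD('d) then 1 + ln (1 / \<epsilon>) else 1))"
    by (rule double_suminf_scales_levels_le[OF p d \<alpha> K, folded \<gamma>_def]) (rule that)
  show thesis
  proof (rule that[OF C])
    fix T :: real assume T: "1 < T"
    have \<epsilon>: "0 < T powr (-1/2)" "T powr (-1/2) \<le> 1" and ln_\<epsilon>: "ln (1 / T powr (-1/2)) = ln T / 2"
      using T powr_less_one[of T "-1/2"] by (auto simp: ln_div ln_powr)
    have exponent: "(T powr (-1/2)) powr ((1 - max \<gamma> (p / q)) / (1 - \<alpha>)) = T powr (- (1 - max \<gamma> (p / q)) / (2 * (1 - \<alpha>)))"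
      unfolding powr_powr by (simp del: minus_diff_eq)
    have "\<forall>n. 0 \<le> measure \<mu> (shell n) \<and> measure \<mu> (shell n) \<le> 1 \<and> measure \<mu> (shell n) \<le> K * 2 powr (- q * n)"
      using shells by simp
    from series[OF \<epsilon> this] show "K_alpha \<mu> p \<alpha> T \<le> ennreal (C * T powr (- (1 - max \<gamma> (p / q)) / (2 * (1 - \<alpha>))) *
      (if \<gamma> * q = p then 1 + ln T / 2 else 1) * (if p = (1 - \<alpha>) * real CARD('d) then 1 + ln T / 2 else 1))"
      unfolding ln_\<epsilon> exponent using \<mu> \<alpha> prob_space.axioms(1)
      by (blast intro: order_trans K_alpha_le_shell_series)
  qed
qed

theorem lemma3p1:
  fixes \<mu> :: "(real ^ 'd) measure" and p q \<alpha> :: real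
  assumes "prob_space \<mu>" and "sets \<mu> = sets borel"
    and "p > 0" and "q > p"
    and "(\<integral>\<^sup>+ x. ennreal (norm x powr q) \<partial>\<mu>) < \<infinity>"
    and "0 < \<alpha>" and "\<alpha> < 1"
  shows "\<exists>C>0. \<forall>T>2.
    K_alpha \<mu> p \<alpha> T \<le> ennreal (C *
      T powr (- (1 - max (max \<alpha> (1 - p / real CARD('d))) (p / q)) / (2 * (1 - \<alpha>))) *
      (if max \<alpha> (1 - p / real CARD('d)) * q = p then ln T else 1) *
      (if p = (1 - \<alpha>) * real CARD('d) then ln T else 1))"
proof -
  define \<gamma> where "\<gamma> = max \<alpha> (1 - p / real CARD('d))"
  define c :: real where "c = 1 / ln 2 + 1 / 2"
  obtain C where C: "0 < C" and bound: "\<And>T. 1 < T \<Longrightarrow> K_alpha \<mu> p \<alpha> T \<le> ennreal (C *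
      T powr (- (1 - max \<gamma> (p / q)) / (2 * (1 - \<alpha>))) *
      (if \<gamma> * q = p then 1 + ln T / 2 else 1) * (if p = (1 - \<alpha>) * real CARD('d) then 1 + ln T / 2 else 1))"
    by (rule K_alpha_le_powr[OF assms, folded \<gamma>_def]) (rule that)
  have "K_alpha \<mu> p \<alpha> T \<le> ennreal (C * c * c * T powr (- (1 - max \<gamma> (p / q)) / (2 * (1 - \<alpha>))) *
      (if \<gamma> * q = p then ln T else 1) * (if p = (1 - \<alpha>) * real CARD('d) then ln T else 1))" if T: "2 < T" for T
  proof -
    have "K_alpha \<mu> p \<alpha> T \<le> ennreal (C * T powr (- (1 - max \<gamma> (p / q)) / (2 * (1 - \<alpha>))) *
        (if \<gamma> * q = p then 1 + ln T / 2 else 1) * (if p = (1 - \<alpha>) * real CARD('d) then 1 + ln T / 2 else 1))"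
      using T by (intro bound) simp
    also have "\<dots> \<le> ennreal (C * T powr (- (1 - max \<gamma> (p / q)) / (2 * (1 - \<alpha>))) *
        (c * (if \<gamma> * q = p then ln T else 1)) * (c * (if p = (1 - \<alpha>) * real CARD('d) then ln T else 1)))"
      using log_factor_le[of T] T C by (intro ennreal_leI mult_mono mult_left_mono) (auto simp: c_def)
    finally show ?thesis
      by (simp add: mult_ac)
  qed
  moreover have "0 < C * c * c"
    using C by (simp add: c_def add_pos_pos)
  ultimately show ?thesis
    unfolding \<gamma>_def by blast
qed

end
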